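(* Let $\mathbf{x}=[1,\mathbf{r}^\mathsf{T},\mathbf{t}^\mathsf{T}]^\mathsf{T}\in\mathbb{R}^{13}$, and let $\mathbf{Q}_1,\dots,\mathbf{Q}_{15}$, $\mathbf{A}_1,\dots,\mathbf{A}_{5N}\in\mathcal{S}^{13}$, the set $\mathcal{P}=\{\mathbf{x}: x_1=1,\ \mathbf{x}^\mathsf{T}\mathbf{A}_i\mathbf{x}\le0\ (i\in[5N]),\ \mathbf{x}^\mathsf{T}\mathbf{Q}_j\mathbf{x}=0\ (j\in[15])\}$, the center $\bar{\mathbf{x}}=[\mathrm{vec}(\bar{\mathbf{R}})^\mathsf{T},\bar{\mathbf{t}}^\mathsf{T}]^\mathsf{T}$ and $$\mathbf{W}(\mathbf{H})=\begin{bmatrix}\bar{\mathbf{x}}^\mathsf{T}\mathbf{H}\bar{\mathbf{x}}-1 & -\bar{\mathbf{x}}^\mathsf{T}\mathbf{H}\\ -\mathbf{H}\bar{\mathbf{x}} & \mathbf{H}\end{bmatrix}$$ be as described in the context. For a fixed integer $\kappa\ge0$ (relaxation order $\kappa+1$), consider the convex program: maximize $\log\det(\mathbf{H})$ over $\mathbf{H}\in\mathcal{S}^{12}$, $\mathbf{H}\succeq0$, and polynomials $\lambda_i,\mu_j\in\mathbb{R}_{2\kappa}[\mathbf{x}]$ ($i\in[5N]$, $j\in[15]$), subject to $$\mathbf{x}^\mathsf{T}\mathbf{W}(\mathbf{H})\mathbf{x}\preceq_{sos}\sum_{i=1}^{5N}\lambda_i(\mathbf{x})\,\mathbf{x}^\mathsf{T}\mathbf{A}_i\mathbf{x}+\sum_{j=1}^{15}\mu_j(\mathbf{x})\,\mathbf{x}^\mathsf{T}\mathbf{Q}_j\mathbf{x},\qquad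 \lambda_i\succeq_{sos}0\ (i\in[5N]).$$ Then its maximizer $\mathbf{H}^\star_\kappa$ defines an ellipsoid centered at $\bar{\mathbf{x}}$ bounding $\mathcal{P}$: every $[1,\mathbf{r}^\mathsf{T},\mathbf{t}^\mathsf{T}]^\mathsf{T}\in\mathcal{P}$ satisfies $\begin{bmatrix}\mathbf{r}-\mathrm{vec}(\bar{\mathbf{R}})\\ \mathbf{t}-\bar{\mathbf{t}}\end{bmatrix}^\mathsf{T}\mathbf{H}^\star_\kappa\begin{bmatrix}\mathbf{r}-\mathrm{vec}(\bar{\mathbf{R}})\\ \mathbf{t}-\bar{\mathbf{t}}\end{bmatrix}\le1$. Moreover, for every $\kappa$, $\log\det(\mathbf{H}^\star_\kappa)\le\log\det(\mathbf{H}^\star_{\kappa+1})$.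
   Context: Here $\mathbf{r}=\mathrm{vec}(\mathbf{R})\in\mathbb{R}^9$ (column stacking), $\mathbf{t}\in\mathbb{R}^3$, and $(\bar{\mathbf{R}},\bar{\mathbf{t}})$ is a given pose estimate. The matrices $\mathbf{Q}_j$ encode $\mathbf{R}\in\mathrm{SO}(3)$ through the homogeneous quadratic equations (with $x_1=1$): $\|\mathbf{r}_k\|^2-x_1^2=0$ for the columns $\mathbf{r}_k$ of $\mathbf{R}$, $\mathbf{r}_1\cdot\mathbf{r}_2=\mathbf{r}_1\cdot\mathbf{r}_3=\mathbf{r}_2\cdot\mathbf{r}_3=0$, and componentwise $\mathbf{r}_1\times\mathbf{r}_2=x_1\mathbf{r}_3$, $\mathbf{r}_2\times\mathbf{r}_3=x_1\mathbf{r}_1$, $\mathbf{r}_3\times\mathbf{r}_1=x_1\mathbf{r}_2$. The matrices $\mathbf{A}_i$ satisfy $\mathbf{x}^\mathsf{T}\mathbf{A}_i\mathbf{x}=2x_1\ell_i(\mathbf{r},\mathbf{t})$ where the linear inequalities $\ell_i\le0$ are, for each keypoint $k\in[N]$ with model point $\mathbf{b}_k\in\mathbb{R}^3$, pixel measurement $\mathbf{y}_k=[u_k,v_k,1]^\mathsf{T}$, radius $r_k>0$ and intrinsics $\mathbf{K}$: $-\hat{\mathbf{e}}_3^\mathsf{T}(\mathbf{R}\mathbf{b}_k+\mathbf{t})\le0$ and $\pm\hat{\mathbf{e}}_j^\mathsf{T}(\mathbf{y}_k\hat{\mathbf{e}}_3^\mathsf{T}-\mathbf{K})(\mathbf{R}\mathbf{b}_k+\mathbf{t})-r_k\hat{\mathbf{e}}_3^\mathsf{T}(\mathbf{R}\mathbf{b}_k+\mathbf{t})\le0$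 for $j=1,2$. $\mathbb{R}_d[\mathbf{x}]$ is the set of polynomials of degree at most $d$; $[\mathbf{x}]_k$ is the monomial vector of degree $k$ (which, as $x_1=1$, contains all monomials of degree $\le k$); $p\succeq_{sos}0$ means $p=[\mathbf{x}]_k^\mathsf{T}\mathbf{A}[\mathbf{x}]_k$ for some $\mathbf{A}\succeq0$, and $p\preceq_{sos}q$ means $q-p\succeq_{sos}0$. *)

theory Defs
  imports Complex_Main "HOL-Library.Extended_Real" "Jordan_Normal_Form.Determinant"
begin

text \<open>The lifted vector x in R^13 has x$0 = x_1 (the homogenising coordinate, = 1 on P),
 x$(1+3*c+i) = entry (i,c) of R (so x$1..x$9 = vec(R), column stacking), x$(10+i) = t_i.\<close>

definition psd_mat :: "nat \<Rightarrow> real mat \<Rightarrow> bool" where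
  "psd_mat n H \<longleftrightarrow> H \<in> carrier_mat n n \<and> transpose_mat H = H \<and>
     (\<forall>v \<in> carrier_vec n. v \<bullet> (H *\<^sub>v v) \<ge> 0)"

definition sym_mat :: "nat \<Rightarrow> real mat \<Rightarrow> bool" where
  "sym_mat n M \<longleftrightarrow> M \<in> carrier_mat n n \<and> transpose_mat M = M"

definition qf :: "real mat \<Rightarrow> real vec \<Rightarrow> real" where
  "qf M x = x \<bullet> (M *\<^sub>v x)"

definition mono :: "(nat \<Rightarrow> nat) \<Rightarrow> real vec \<Rightarrow> real" where
  "mono \<alpha> x = (\<Prod>i<13. (x $ i) ^ (\<alpha> i))"

text \<open>homogeneous monomials of degree exactly d ([x]_d; as x_1=1 these give all monomials of degree \<le> d)\<close>
definition mons_hom :: "nat \<Rightarrow> (nat \<Rightarrow> nat) set" where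
  "mons_hom d = {\<alpha>. (\<forall>i\<ge>13. \<alpha> i = 0) \<and> (\<Sum>i<13. \<alpha> i) = d}"

definition mons_le :: "nat \<Rightarrow> (nat \<Rightarrow> nat) set" where
  "mons_le d = {\<alpha>. (\<forall>i\<ge>13. \<alpha> i = 0) \<and> (\<Sum>i<13. \<alpha> i) \<le> d}"

definition polys :: "nat \<Rightarrow> (real vec \<Rightarrow> real) set" where
  "polys d = {p. \<exists>c. \<forall>x \<in> carrier_vec 13. p x = (\<Sum>\<alpha>\<in>mons_le d. c \<alpha> * mono \<alpha> x)}"

definition sos :: "nat \<Rightarrow> (real vec \<Rightarrow> real) \<Rightarrow> bool" where
  "sos k p \<longleftrightarrow> (\<exists>G :: (nat \<Rightarrow> nat) \<Rightarrow> (nat \<Rightarrow> nat) \<Rightarrow> real.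
      (\<forall>\<alpha>\<in>mons_hom k. \<forall>\<beta>\<in>mons_hom k. G \<alpha> \<beta> = G \<beta> \<alpha>) \<and>
      (\<forall>v. (\<Sum>\<alpha>\<in>mons_hom k. \<Sum>\<beta>\<in>mons_hom k. v \<alpha> * G \<alpha> \<beta> * v \<beta>) \<ge> 0) \<and>
      (\<forall>x \<in> carrier_vec 13. x $ 0 = 1 \<longrightarrow>
          p x = (\<Sum>\<alpha>\<in>mons_hom k. \<Sum>\<beta>\<in>mons_hom k. G \<alpha> \<beta> * mono \<alpha> x * mono \<beta> x)))"

definition rcol :: "real vec \<Rightarrow> nat \<Rightarrow> nat \<Rightarrow> real" where
  "rcol x c i = x $ (1 + 3 * c + i)"

definition tcomp :: "real vec \<Rightarrow> nat \<Rightarrow> real" where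
  "tcomp x i = x $ (10 + i)"

definition cross3c :: "(nat \<Rightarrow> real) \<Rightarrow> (nat \<Rightarrow> real) \<Rightarrow> nat \<Rightarrow> real" where
  "cross3c a b c = (if c = 0 then a 1 * b 2 - a 2 * b 1
                    else if c = 1 then a 2 * b 0 - a 0 * b 2
                    else a 0 * b 1 - a 1 * b 0)"

definition dot3 :: "(nat \<Rightarrow> real) \<Rightarrow> (nat \<Rightarrow> real) \<Rightarrow> real" where
  "dot3 a b = (\<Sum>i<3. a i * b i)"

definition so3_eq :: "nat \<Rightarrow> real vec \<Rightarrow> real" where
  "so3_eq j x =
    (let h = x $ 0; r = rcol x in
     if j < 3 then dot3 (r j) (r j) - h ^ 2
     else if j = 3 then dot3 (r 0) (r 1)
     else if j = 4 then dot3 (r 0) (r 2)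
     else if j = 5 then dot3 (r 1) (r 2)
     else if j < 9 then cross3c (r 0) (r 1) (j - 6) - h * r 2 (j - 6)
     else if j < 12 then cross3c (r 1) (r 2) (j - 9) - h * r 0 (j - 9)
     else cross3c (r 2) (r 0) (j - 12) - h * r 1 (j - 12))"

definition cam_pt :: "(nat \<Rightarrow> real vec) \<Rightarrow> nat \<Rightarrow> real vec \<Rightarrow> nat \<Rightarrow> real" where
  "cam_pt b k x i = (\<Sum>c<3. rcol x c i * (b k $ c)) + tcomp x i"

definition Kmul :: "real mat \<Rightarrow> (nat \<Rightarrow> real) \<Rightarrow> nat \<Rightarrow> real" where
  "Kmul K p j = (\<Sum>c<3. K $$ (j, c) * p c)"

definition ell :: "real mat \<Rightarrow> (nat \<Rightarrow> real vec) \<Rightarrow> (nat \<Rightarrow> real) \<Rightarrow> (nat \<Rightarrow> real)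
      \<Rightarrow> (nat \<Rightarrow> real) \<Rightarrow> nat \<Rightarrow> real vec \<Rightarrow> real" where
  "ell K b u v rad i x =
    (let k = i div 5; m = i mod 5; p = cam_pt b k x;
         e1 = u k * p 2 - Kmul K p 0; e2 = v k * p 2 - Kmul K p 1 in
     if m = 0 then - p 2
     else if m = 1 then e1 - rad k * p 2
     else if m = 2 then - e1 - rad k * p 2
     else if m = 3 then e2 - rad k * p 2
     else - e2 - rad k * p 2)"

definition xbar :: "real mat \<Rightarrow> real vec \<Rightarrow> real vec" where
  "xbar Rb tb = vec 12 (\<lambda>i. if i < 9 then Rb $$ (i mod 3, i div 3) else tb $ (i - 9))"

definition Wmat :: "real mat \<Rightarrow> real vec \<Rightarrow> real mat" where
  "Wmat H xb = mat 13 13 (\<lambda>(i, j).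
     if i = 0 \<and> j = 0 then xb \<bullet> (H *\<^sub>v xb) - 1
     else if i = 0 then - (\<Sum>l<12. xb $ l * H $$ (l, j - 1))
     else if j = 0 then - (H *\<^sub>v xb) $ (i - 1)
     else H $$ (i - 1, j - 1))"

definition logdet :: "real mat \<Rightarrow> ereal" where
  "logdet H = (if det H > 0 then ereal (ln (det H)) else -\<infinity>)"

definition feasible :: "nat \<Rightarrow> (nat \<Rightarrow> real mat) \<Rightarrow> (nat \<Rightarrow> real mat) \<Rightarrow> real vec
      \<Rightarrow> nat \<Rightarrow> real mat \<Rightarrow> bool" where
  "feasible N A Q xb \<kappa> H \<longleftrightarrow> psd_mat 12 H \<and>
     (\<exists>lam \<mu> :: nat \<Rightarrow> real vec \<Rightarrow> real.
        (\<forall>i<5*N. lam i \<in> polys (2*\<kappa>) \<and> sos \<kappa> (lam i)) \<and>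
        (\<forall>j<15. \<mu> j \<in> polys (2*\<kappa>)) \<and>
        sos (\<kappa>+1) (\<lambda>x. (\<Sum>i<5*N. lam i x * qf (A i) x) + (\<Sum>j<15. \<mu> j x * qf (Q j) x)
                        - qf (Wmat H xb) x))"

definition maximizer :: "nat \<Rightarrow> (nat \<Rightarrow> real mat) \<Rightarrow> (nat \<Rightarrow> real mat) \<Rightarrow> real vec
      \<Rightarrow> nat \<Rightarrow> real mat \<Rightarrow> bool" where
  "maximizer N A Q xb \<kappa> H \<longleftrightarrow> feasible N A Q xb \<kappa> H \<and>
     (\<forall>H'. feasible N A Q xb \<kappa> H' \<longrightarrow> logdet H' \<le> logdet H)"

definition Pset :: "nat \<Rightarrow> (nat \<Rightarrow> real mat) \<Rightarrow> (nat \<Rightarrow> real mat) \<Rightarrow> real vec set" where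
  "Pset N A Q = {x \<in> carrier_vec 13. x $ 0 = 1 \<and> (\<forall>i<5*N. qf (A i) x \<le> 0) \<and> (\<forall>j<15. qf (Q j) x = 0)}"

end

theory Submission
  imports Defs
begin

(* At a point x of P the order-(\<kappa>+1) certificate is a sum of squares, hence nonnegative,
   while each \<lambda>_i(x) \<ge> 0, x^T A_i x \<le> 0 and x^T Q_j x = 0; so x^T W(H) x \<le> 0, and for x_1 = 1
   this quadratic form is exactly (x - xbar)^T H (x - xbar) - 1.
   For the monotonicity in \<kappa>: multiplying a monomial by x_1 = 1 embeds [x]_k into [x]_(k+1)
   without changing its values where x_1 = 1, so a Gram matrix of order k, padded with zeros, is
   one of order k+1. Hence the feasible sets grow with \<kappa>, and so does the optimal value. *)

lemma qf_Wmat: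
  assumes H: "H \<in> carrier_mat 12 12" and x: "x \<in> carrier_vec 13" and x0: "x $ 0 = 1"
    and xb: "xb \<in> carrier_vec 12"
  shows "qf (Wmat H xb) x = (let d = vec 12 (\<lambda>i. x $ (i + 1) - xb $ i) in d \<bullet> (H *\<^sub>v d)) - 1"
proof -
  have Hxb: "(H *\<^sub>v xb) $ i = (\<Sum>j<12. H $$ (i,j) * xb $ j)" if "i < 12" for i
    using H xb that by (simp add: scalar_prod_def row_def atLeast0LessThan mult.commute)
  have xbHxb: "xb \<bullet> (H *\<^sub>v xb) = (\<Sum>i<12. xb $ i * (\<Sum>j<12. H $$ (i,j) * xb $ j))"
    using H xb by (simp add: scalar_prod_def Hxb atLeast0LessThan)
  have "qf (Wmat H xb) x = (\<Sum>i<Suc 12. x $ i * (\<Sum>j<Suc 12. Wmat H xb $$ (i,j) * x $ j))"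
    using x by (simp add: qf_def Wmat_def scalar_prod_def row_def atLeast0LessThan mult.commute)
  also have "\<dots> = (xb \<bullet> (H *\<^sub>v xb) - 1) + (\<Sum>j<12. - (\<Sum>l<12. xb $ l * H $$ (l, j)) * x $ Suc j)
     + (\<Sum>i<12. x $ Suc i * (- (\<Sum>j<12. H $$ (i,j) * xb $ j) + (\<Sum>j<12. H $$ (i,j) * x $ Suc j)))"
    unfolding sum.lessThan_Suc_shift using x0 by (simp add: Wmat_def Hxb)
  also have "\<dots> = (\<Sum>i<12. (x $ Suc i - xb $ i) * (\<Sum>j<12. H $$ (i,j) * (x $ Suc j - xb $ j))) - 1"
    unfolding xbHxb
    by (simp add: algebra_simps sum_distrib_left sum_distrib_right sum.distrib sum_subtractf sum_negf,
        subst (2) sum.swap, simp add: algebra_simps)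
  also have "\<dots> = (let d = vec 12 (\<lambda>i. x $ (i + 1) - xb $ i) in d \<bullet> (H *\<^sub>v d)) - 1"
    using H by (simp add: scalar_prod_def row_def atLeast0LessThan mult.commute)
  finally show ?thesis .
qed

lemma finite_mons_le: "finite (mons_le d)"
proof -
  let ?extend = "\<lambda>f i. if i < 13 then f i else 0"
  have "mons_le d \<subseteq> ?extend ` (PiE {..<13} (\<lambda>_. {..d}))"
  proof
    fix \<alpha> assume \<alpha>: "\<alpha> \<in> mons_le d"
    have "\<alpha> i \<le> d" if "i < 13" for i
    proof -
      have "\<alpha> i \<le> (\<Sum>i<13. \<alpha> i)" using that by (intro member_le_sum) auto
      then show ?thesis using \<alpha> by (auto simp: mons_le_def)
    qed
    then have "restrict \<alpha> {..<13} \<in> PiE {..<13} (\<lambda>_. {..d})" by auto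
    moreover have "\<alpha> = ?extend (restrict \<alpha> {..<13})"
      using \<alpha> by (auto simp: mons_le_def fun_eq_iff)
    ultimately show "\<alpha> \<in> ?extend ` (PiE {..<13} (\<lambda>_. {..d}))" by blast
  qed
  then show ?thesis by (rule finite_subset) (auto intro: finite_PiE)
qed

lemma finite_mons_hom: "finite (mons_hom d)"
  by (rule finite_subset[OF _ finite_mons_le[of d]]) (auto simp: mons_hom_def mons_le_def)

lemma polys_mono:
  assumes p: "p \<in> polys d" and "d \<le> d'"
  shows "p \<in> polys d'"
proof -
  obtain c where c: "\<forall>x \<in> carrier_vec 13. p x = (\<Sum>\<alpha>\<in>mons_le d. c \<alpha> * mono \<alpha> x)"
    using p by (auto simp: polys_def)
  have sub: "mons_le d \<subseteq> mons_le d'" using \<open>d \<le> d'\<close> by (auto simp: mons_le_def)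
  define c' where "c' \<alpha> = (if \<alpha> \<in> mons_le d then c \<alpha> else 0)" for \<alpha>
  have "p x = (\<Sum>\<alpha>\<in>mons_le d'. c' \<alpha> * mono \<alpha> x)" if "x \<in> carrier_vec 13" for x
  proof -
    have "p x = (\<Sum>\<alpha>\<in>mons_le d. c' \<alpha> * mono \<alpha> x)" using c that by (simp add: c'_def)
    also have "\<dots> = (\<Sum>\<alpha>\<in>mons_le d'. c' \<alpha> * mono \<alpha> x)"
      by (rule sum.mono_neutral_left[OF finite_mons_le sub]) (auto simp: c'_def)
    finally show ?thesis .
  qed
  then show ?thesis by (auto simp: polys_def)
qed

lemma sos_nonneg:
  assumes "sos k p" "x \<in> carrier_vec 13" "x $ 0 = 1"
  shows "p x \<ge> 0"
proof -
  obtain G where G: "\<forall>v. (\<Sum>\<alpha>\<in>mons_hom k. \<Sum>\<beta>\<in>mons_hom k. v \<alpha> * G \<alpha> \<beta> * v \<beta>) \<ge> 0"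
    and px: "p x = (\<Sum>\<alpha>\<in>mons_hom k. \<Sum>\<beta>\<in>mons_hom k. G \<alpha> \<beta> * mono \<alpha> x * mono \<beta> x)"
    using assms unfolding sos_def by blast
  show ?thesis
    using G[rule_format, of "\<lambda>\<alpha>. mono \<alpha> x"] px by (simp add: mult.commute mult.left_commute)
qed

definition times_x0 :: "(nat \<Rightarrow> nat) \<Rightarrow> nat \<Rightarrow> nat" where
  "times_x0 \<alpha> = \<alpha>(0 := Suc (\<alpha> 0))"

definition div_x0 :: "(nat \<Rightarrow> nat) \<Rightarrow> nat \<Rightarrow> nat" where
  "div_x0 \<alpha> = \<alpha>(0 := \<alpha> 0 - 1)"

lemma div_x0_times_x0 [simp]: "div_x0 (times_x0 \<alpha>) = \<alpha>"
  by (auto simp: times_x0_def div_x0_def fun_eq_iff)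

lemma times_x0_div_x0: "\<alpha> 0 \<noteq> 0 \<Longrightarrow> times_x0 (div_x0 \<alpha>) = \<alpha>"
  by (auto simp: times_x0_def div_x0_def fun_eq_iff)

lemma times_x0_0 [simp]: "times_x0 \<alpha> 0 = Suc (\<alpha> 0)"
  by (simp add: times_x0_def)

lemma inj_times_x0: "inj times_x0"
  by (metis div_x0_times_x0 injI)

lemma sum_lessThan_13: "(\<Sum>i<13. f i) = f 0 + (\<Sum>i<12. f (Suc i))"
  using sum.lessThan_Suc_shift[of f 12] by simp

lemma mono_times_x0: "mono (times_x0 \<alpha>) x = x $ 0 * mono \<alpha> x"
  using prod.lessThan_Suc_shift[of "\<lambda>i. x $ i ^ times_x0 \<alpha> i" 12]
    prod.lessThan_Suc_shift[of "\<lambda>i. x $ i ^ \<alpha> i" 12]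
  by (simp add: mono_def times_x0_def)

lemma div_x0_mons_hom: "\<alpha> \<in> mons_hom (Suc k) \<Longrightarrow> \<alpha> 0 \<noteq> 0 \<Longrightarrow> div_x0 \<alpha> \<in> mons_hom k"
  by (auto simp: mons_hom_def sum_lessThan_13 div_x0_def)

lemma image_times_x0_mons_hom: "times_x0 ` mons_hom k = {\<alpha> \<in> mons_hom (Suc k). \<alpha> 0 \<noteq> 0}"
proof
  show "times_x0 ` mons_hom k \<subseteq> {\<alpha> \<in> mons_hom (Suc k). \<alpha> 0 \<noteq> 0}"
    by (auto simp: mons_hom_def sum_lessThan_13 times_x0_def)
  show "{\<alpha> \<in> mons_hom (Suc k). \<alpha> 0 \<noteq> 0} \<subseteq> times_x0 ` mons_hom k"
  proof
    fix \<alpha> assume "\<alpha> \<in> {\<alpha> \<in> mons_hom (Suc k). \<alpha> 0 \<noteq> 0}"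
    then show "\<alpha> \<in> times_x0 ` mons_hom k"
      using times_x0_div_x0[of \<alpha>] div_x0_mons_hom[of \<alpha> k] by (metis (mono_tags) image_eqI mem_Collect_eq)
  qed
qed

lemma sum_mons_hom_Suc_reindex:
  fixes F :: "(nat \<Rightarrow> nat) \<Rightarrow> (nat \<Rightarrow> nat) \<Rightarrow> 'a::comm_monoid_add"
  assumes "\<And>\<alpha> \<beta>. \<alpha> 0 = 0 \<or> \<beta> 0 = 0 \<Longrightarrow> F \<alpha> \<beta> = 0"
  shows "(\<Sum>\<alpha>\<in>mons_hom (Suc k). \<Sum>\<beta>\<in>mons_hom (Suc k). F \<alpha> \<beta>)
       = (\<Sum>\<alpha>\<in>mons_hom k. \<Sum>\<beta>\<in>mons_hom k. F (times_x0 \<alpha>) (times_x0 \<beta>))"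
proof -
  let ?T = "mons_hom (Suc k)" and ?S = "times_x0 ` mons_hom k"
  have ST: "?S \<subseteq> ?T" using image_times_x0_mons_hom by auto
  have "(\<Sum>\<alpha>\<in>?T. \<Sum>\<beta>\<in>?T. F \<alpha> \<beta>) = (\<Sum>\<alpha>\<in>?S. \<Sum>\<beta>\<in>?T. F \<alpha> \<beta>)"
    by (rule sum.mono_neutral_right[OF finite_mons_hom ST])
       (auto simp: image_times_x0_mons_hom assms intro!: sum.neutral)
  also have "\<dots> = (\<Sum>\<alpha>\<in>?S. \<Sum>\<beta>\<in>?S. F \<alpha> \<beta>)"
    by (rule sum.cong[OF refl], rule sum.mono_neutral_right[OF finite_mons_hom ST])
       (auto simp: image_times_x0_mons_hom assms)
  also have "\<dots> = (\<Sum>\<alpha>\<in>mons_hom k. \<Sum>\<beta>\<in>mons_hom k. F (times_x0 \<alpha>) (times_x0 \<beta>))"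
    using inj_times_x0 by (simp add: sum.reindex inj_on_def)
  finally show ?thesis .
qed

lemma sos_Suc:
  assumes "sos k p"
  shows "sos (Suc k) p"
proof -
  obtain G where G_sym: "\<forall>\<alpha>\<in>mons_hom k. \<forall>\<beta>\<in>mons_hom k. G \<alpha> \<beta> = G \<beta> \<alpha>"
    and G_psd: "\<forall>v. (\<Sum>\<alpha>\<in>mons_hom k. \<Sum>\<beta>\<in>mons_hom k. v \<alpha> * G \<alpha> \<beta> * v \<beta>) \<ge> 0"
    and G_repr: "\<forall>x \<in> carrier_vec 13. x $ 0 = 1 \<longrightarrow>
          p x = (\<Sum>\<alpha>\<in>mons_hom k. \<Sum>\<beta>\<in>mons_hom k. G \<alpha> \<beta> * mono \<alpha> x * mono \<beta> x)"
    using assms unfolding sos_def by blast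
  define G' where
    "G' \<alpha> \<beta> = (if \<alpha> 0 \<noteq> 0 \<and> \<beta> 0 \<noteq> 0 then G (div_x0 \<alpha>) (div_x0 \<beta>) else 0)" for \<alpha> \<beta>
  have "\<forall>\<alpha>\<in>mons_hom (Suc k). \<forall>\<beta>\<in>mons_hom (Suc k). G' \<alpha> \<beta> = G' \<beta> \<alpha>"
    using G_sym div_x0_mons_hom by (auto simp: G'_def)
  moreover have "(\<Sum>\<alpha>\<in>mons_hom (Suc k). \<Sum>\<beta>\<in>mons_hom (Suc k). v \<alpha> * G' \<alpha> \<beta> * v \<beta>) \<ge> 0" for v
  proof -
    have "(\<Sum>\<alpha>\<in>mons_hom (Suc k). \<Sum>\<beta>\<in>mons_hom (Suc k). v \<alpha> * G' \<alpha> \<beta> * v \<beta>)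
        = (\<Sum>\<alpha>\<in>mons_hom k. \<Sum>\<beta>\<in>mons_hom k. v (times_x0 \<alpha>) * G \<alpha> \<beta> * v (times_x0 \<beta>))"
      by (subst sum_mons_hom_Suc_reindex) (auto simp: G'_def)
    then show ?thesis using G_psd by simp
  qed
  moreover have "p x = (\<Sum>\<alpha>\<in>mons_hom (Suc k). \<Sum>\<beta>\<in>mons_hom (Suc k). G' \<alpha> \<beta> * mono \<alpha> x * mono \<beta> x)"
    if "x \<in> carrier_vec 13" "x $ 0 = 1" for x
  proof -
    have "(\<Sum>\<alpha>\<in>mons_hom (Suc k). \<Sum>\<beta>\<in>mons_hom (Suc k). G' \<alpha> \<beta> * mono \<alpha> x * mono \<beta> x)
        = (\<Sum>\<alpha>\<in>mons_hom k. \<Sum>\<beta>\<in>mons_hom k. G \<alpha> \<beta> * mono \<alpha> x * mono \<beta> x)"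
      by (subst sum_mons_hom_Suc_reindex) (auto simp: G'_def mono_times_x0 that)
    then show ?thesis using G_repr that by simp
  qed
  ultimately show ?thesis unfolding sos_def by blast
qed

lemma feasible_Suc:
  assumes "feasible N A Q xb \<kappa> H"
  shows "feasible N A Q xb (Suc \<kappa>) H"
proof -
  obtain lam \<mu> where H: "psd_mat 12 H"
    and lam: "\<forall>i<5*N. lam i \<in> polys (2*\<kappa>) \<and> sos \<kappa> (lam i)"
    and \<mu>: "\<forall>j<15. \<mu> j \<in> polys (2*\<kappa>)"
    and cert: "sos (\<kappa>+1) (\<lambda>x. (\<Sum>i<5*N. lam i x * qf (A i) x) + (\<Sum>j<15. \<mu> j x * qf (Q j) x)
                        - qf (Wmat H xb) x)"
    using assms unfolding feasible_def by blast
  have "\<forall>i<5*N. lam i \<in> polys (2*Suc \<kappa>) \<and> sos (Suc \<kappa>) (lam i)"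
    using lam polys_mono sos_Suc by auto
  moreover have "\<forall>j<15. \<mu> j \<in> polys (2*Suc \<kappa>)" using \<mu> polys_mono by auto
  ultimately show ?thesis using H sos_Suc[OF cert] unfolding feasible_def by auto
qed

lemma maximizer_logdet_mono:
  assumes "maximizer N A Q xb \<kappa> H1" and "maximizer N A Q xb (Suc \<kappa>) H2"
  shows "logdet H1 \<le> logdet H2"
  using assms feasible_Suc by (simp add: maximizer_def)

lemma feasible_ellipsoid_contains_Pset:
  assumes feas: "feasible N A Q xb \<kappa> H" and xb: "xb \<in> carrier_vec 12" and xP: "x \<in> Pset N A Q"
  shows "let d = vec 12 (\<lambda>i. x $ (i + 1) - xb $ i) in d \<bullet> (H *\<^sub>v d) \<le> 1"
proof -
  obtain lam \<mu> where H: "psd_mat 12 H"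
    and lam: "\<forall>i<5*N. lam i \<in> polys (2*\<kappa>) \<and> sos \<kappa> (lam i)"
    and cert: "sos (\<kappa>+1) (\<lambda>x. (\<Sum>i<5*N. lam i x * qf (A i) x) + (\<Sum>j<15. \<mu> j x * qf (Q j) x)
                        - qf (Wmat H xb) x)"
    using feas unfolding feasible_def by blast
  have x: "x \<in> carrier_vec 13" and x0: "x $ 0 = 1" and xA: "\<forall>i<5*N. qf (A i) x \<le> 0"
    and xQ: "\<forall>j<15. qf (Q j) x = 0" using xP by (auto simp: Pset_def)
  have "(\<Sum>i<5*N. lam i x * qf (A i) x) \<le> 0"
  proof (rule sum_nonpos)
    fix i assume "i \<in> {..<5*N}"
    then have "lam i x \<ge> 0" "qf (A i) x \<le> 0" using lam xA sos_nonneg[OF _ x x0] by auto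
    then show "lam i x * qf (A i) x \<le> 0" by (simp add: mult_nonneg_nonpos)
  qed
  moreover have "(\<Sum>j<15. \<mu> j x * qf (Q j) x) = 0" using xQ by simp
  ultimately have "qf (Wmat H xb) x \<le> 0" using sos_nonneg[OF cert x x0] by simp
  moreover have "H \<in> carrier_mat 12 12" using H by (simp add: psd_mat_def)
  ultimately show ?thesis using qf_Wmat[OF _ x x0 xb] by (simp add: Let_def)
qed

theorem proposition5:
  fixes N :: nat and K Rb :: "real mat" and tb :: "real vec"
    and b :: "nat \<Rightarrow> real vec" and u v rad :: "nat \<Rightarrow> real"
    and A Q :: "nat \<Rightarrow> real mat"
  assumes K: "K \<in> carrier_mat 3 3"
    and Rb: "Rb \<in> carrier_mat 3 3" and tb: "tb \<in> carrier_vec 3"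
    and b: "\<forall>k<N. b k \<in> carrier_vec 3"
    and rad: "\<forall>k<N. rad k > 0"
    and A_sym: "\<forall>i<5*N. sym_mat 13 (A i)"
    and A_def: "\<forall>i<5*N. \<forall>x\<in>carrier_vec 13. qf (A i) x = 2 * x $ 0 * ell K b u v rad i x"
    and Q_sym: "\<forall>j<15. sym_mat 13 (Q j)"
    and Q_def: "\<forall>j<15. \<forall>x\<in>carrier_vec 13. qf (Q j) x = so3_eq j x"
  shows "(\<forall>\<kappa> H. maximizer N A Q (xbar Rb tb) \<kappa> H \<longrightarrow>
            (\<forall>x \<in> Pset N A Q.
               (let d = vec 12 (\<lambda>i. x $ (i + 1) - xbar Rb tb $ i) in d \<bullet> (H *\<^sub>v d) \<le> 1))) \<and>
         (\<forall>\<kappa> H1 H2. maximizer N A Q (xbar Rb tb) \<kappa> H1 \<longrightarrow>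
            maximizer N A Q (xbar Rb tb) (\<kappa> + 1) H2 \<longrightarrow> logdet H1 \<le> logdet H2)"
proof -
  have "xbar Rb tb \<in> carrier_vec 12" by (simp add: xbar_def)
  then show ?thesis
    using feasible_ellipsoid_contains_Pset maximizer_logdet_mono
    by (auto simp: maximizer_def)
qed

end
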